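(* Let $n,m\ge 1$ and let $f(x)=x^{nm}+\sum_{i=1}^{nm}c_i x^{nm-i}$ be an irreducible polynomial over $\mathrm{GF}(2)$ of degree $nm$ with $f(x)\neq x$, and let $e$ be its exponent (the least positive integer with $f(x)\mid x^e-1$), so that $2^{nm}-1=k\cdot e$ for a positive integer $k$. Suppose $e=(2^n-1)\ell$ with $\gcd(2^n-1,\ell)=1$, and write $r=2^n-1$. The $2^{nm}-1$ nonzero binary sequences satisfying $a_j=\sum_{i=1}^{nm}c_i a_{j-i}$ (mod 2) are periodic with least period $e$ and fall into exactly $k$ classes under cyclic shifts; choose one period $(s_0,s_1,\ldots,s_{e-1})$ of a representative of each class and fold it into the $r\times\ell$ array $A$ defined by $A_{\,i \bmod r,\ i \bmod \ell}=s_i$ for $0\le i\le e-1$ (well defined by the Chinese remainder theorem). For $0\le p<r$ and $0\le q<\ell$ let $$R_{p,q}=\{\,i\in\{0,\ldots,e-1\}:\ (i-p)\bmod r\in\{0,\ldots,n-1\},\ (i-q)\bmod \ell\in\{0,\ldots,m-1\}\,\},$$ the set of sequence positions folded into the cyclic $n\times m$ window with top-left corner $(p,q)$, and let $g_{R}(x)=\prod_{\emptyset\neq Q\subseteq R}\sum_{i\in Q}x^{i}$. If $f(x)$ does not divide $g_{R_{p,q}}(x)$ for every such $(p,q)$, then the $k$ folded arrays form a $(2^n-1,\ell;n,m)$-PRAC.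
   Context: All arrays are binary and cyclic (doubly periodic): an $n\times m$ window of an $r\times t$ array $A$ at position $(p,q)$ is the matrix with entries $A_{(p+u)\bmod r,\,(q+v)\bmod t}$, $0\le u<n$, $0\le v<m$. An $(r,t;n,m)$-PRAC (pseudo-random array code) is a set $\mathbb{C}$ of binary $r\times t$ cyclic arrays such that (i) every nonzero binary $n\times m$ matrix appears exactly once as a window in one of the arrays of $\mathbb{C}$ (i.e., there is exactly one pair consisting of an array of $\mathbb{C}$ and a window position at which it appears), and (ii) the shift-and-add property holds: if $\mathcal{A},\mathcal{A}'\in\mathbb{C}$ are distinct, or if $\mathcal{A}\in\mathbb{C}$ and $\mathcal{A}'$ is a nontrivial cyclic (horizontal and/or vertical) shift of $\mathcal{A}$, then the entrywise mod-2 sum $\mathcal{A}+\mathcal{A}'$ is, up to a cyclic shift, an array of $\mathbb{C}$. *)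

theory Defs
  imports "HOL-Library.Z2" "HOL-Computational_Algebra.Polynomial_Factorial"
begin

text \<open>GF(2) is the type bit. Binary arrays of size r x t are represented as functions
  nat => nat => bit that vanish outside the index box {0..<r} x {0..<t}.\<close>

definition is_array :: "nat \<Rightarrow> nat \<Rightarrow> (nat \<Rightarrow> nat \<Rightarrow> bit) \<Rightarrow> bool" where
  "is_array r t A \<longleftrightarrow> (\<forall>i j. \<not> (i < r \<and> j < t) \<longrightarrow> A i j = 0)"

definition window :: "nat \<Rightarrow> nat \<Rightarrow> nat \<Rightarrow> nat \<Rightarrow> (nat \<Rightarrow> nat \<Rightarrow> bit) \<Rightarrow> nat \<Rightarrow> nat
    \<Rightarrow> (nat \<Rightarrow> nat \<Rightarrow> bit)" where
  "window r t n m A p q = (\<lambda>u v. if u < n \<and> v < m then A ((p + u) mod r) ((q + v) mod t) else 0)"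

definition shift_arr :: "nat \<Rightarrow> nat \<Rightarrow> nat \<Rightarrow> nat \<Rightarrow> (nat \<Rightarrow> nat \<Rightarrow> bit) \<Rightarrow> (nat \<Rightarrow> nat \<Rightarrow> bit)" where
  "shift_arr r t a b A = (\<lambda>i j. if i < r \<and> j < t then A ((i + a) mod r) ((j + b) mod t) else 0)"

definition add_arr :: "(nat \<Rightarrow> nat \<Rightarrow> bit) \<Rightarrow> (nat \<Rightarrow> nat \<Rightarrow> bit) \<Rightarrow> (nat \<Rightarrow> nat \<Rightarrow> bit)" where
  "add_arr A B = (\<lambda>i j. A i j + B i j)"

definition is_PRAC :: "nat \<Rightarrow> nat \<Rightarrow> nat \<Rightarrow> nat \<Rightarrow> (nat \<Rightarrow> nat \<Rightarrow> bit) set \<Rightarrow> bool" where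
  "is_PRAC r t n m C \<longleftrightarrow>
     (\<forall>A\<in>C. is_array r t A) \<and>
     (\<forall>M. is_array n m M \<and> M \<noteq> (\<lambda>_ _. 0) \<longrightarrow>
        card {(A, p, q). A \<in> C \<and> p < r \<and> q < t \<and> window r t n m A p q = M} = 1) \<and>
     (\<forall>A\<in>C. \<forall>A'\<in>C. A \<noteq> A' \<longrightarrow>
        (\<exists>B\<in>C. \<exists>a<r. \<exists>b<t. add_arr A A' = shift_arr r t a b B)) \<and>
     (\<forall>A\<in>C. \<forall>a<r. \<forall>b<t. (a, b) \<noteq> (0, 0) \<longrightarrow>
        (\<exists>B\<in>C. \<exists>c<r. \<exists>d<t. add_arr A (shift_arr r t a b A) = shift_arr r t c d B))"

definition poly_exponent :: "bit poly \<Rightarrow> nat" where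
  "poly_exponent f = (LEAST e. 0 < e \<and> f dvd (monom 1 e - 1))"

text \<open>Binary sequences satisfying the linear recurrence of the monic polynomial f of degree N:
  a_j = sum_{i=1}^N c_i a_{j-i} where f = x^N + sum c_i x^(N-i), i.e. c_i = coeff f (N - i).\<close>
definition lfsr_seq :: "bit poly \<Rightarrow> (nat \<Rightarrow> bit) \<Rightarrow> bool" where
  "lfsr_seq f s \<longleftrightarrow> (\<forall>j \<ge> degree f.
      s j = (\<Sum>i = 1..degree f. coeff f (degree f - i) * s (j - i)))"

definition shift_seq :: "nat \<Rightarrow> (nat \<Rightarrow> bit) \<Rightarrow> (nat \<Rightarrow> bit)" where
  "shift_seq d s = (\<lambda>j. s (j + d))"

definition fold_arr :: "nat \<Rightarrow> nat \<Rightarrow> (nat \<Rightarrow> bit) \<Rightarrow> (nat \<Rightarrow> nat \<Rightarrow> bit)" where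
  "fold_arr r l s = (\<lambda>a b. if a < r \<and> b < l
      then s (THE i. i < r * l \<and> i mod r = a \<and> i mod l = b) else 0)"

definition window_positions :: "nat \<Rightarrow> nat \<Rightarrow> nat \<Rightarrow> nat \<Rightarrow> nat \<Rightarrow> nat \<Rightarrow> nat set" where
  "window_positions r l n m p q =
     {i. i < r * l \<and> (int i - int p) mod int r < int n \<and> (int i - int q) mod int l < int m}"

definition g_poly :: "nat set \<Rightarrow> bit poly" where
  "g_poly R = (\<Prod>Q\<in>{Q. Q \<subseteq> R \<and> Q \<noteq> {}}. \<Sum>i\<in>Q. monom 1 i)"

end

theory Submission
  imports Defs Berlekamp_Zassenhaus.Distinct_Degree_Factorization "HOL-Number_Theory.Residues"
begin

(* Every sequence of the recurrence is j \<mapsto> L(h x^j) for a polynomial h, where L(g) is the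
  coefficient of x^(deg f - 1) in g mod f; it is nonzero iff f does not divide h, and shifting it
  by d multiplies h by x^d. The window at (0,0) of the folded array of h lists the values L(h x^i)
  for i in R = R_{0,0}. Since f does not divide g_R, the residues of the x^i (i in R) are linearly
  independent, and since |R| = nm = deg f they span all residues; hence the window determines
  h mod f, and every n x m matrix is the window of some h. The window at (p,q) is the
  (0,0)-window of h x^d for any d with d mod r = p and d mod l = q, so every nonzero matrix occurs
  exactly once among the representatives, and the shift-and-add property is the linearity of
  h \<mapsto> L(h x^j). The window fits into the array (m \<le> l) because deg f is the order of 2
  modulo the exponent. *)

(* Unique_Factorization, imported with Berlekamp_Zassenhaus, declares its own coprime. *)
hide_const (open) Unique_Factorization.comm_monoid_mult_class.coprime

section \<open>Polynomials over finite fields\<close>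

lemma UNIV_bit: "(UNIV :: bit set) = {0, 1}"
  by auto

instance bit :: finite
  by standard (simp add: UNIV_bit)

lemma card_UNIV_bit [simp]: "CARD(bit) = 2"
  by (simp add: UNIV_bit)

lemma bit_add_eq_0_iff: "(x :: bit) + y = 0 \<longleftrightarrow> x = y"
  by auto

lemma bit_poly_add_self [simp]: "(p :: bit poly) + p = 0"
  by (rule poly_eqI) (simp only: coeff_add coeff_0, simp)

lemma bit_poly_uminus [simp]: "- (p :: bit poly) = p"
  using add_eq_0_iff bit_poly_add_self by metis

lemma bit_poly_diff_eq_add: "(p :: bit poly) - q = p + q"
  by (simp add: diff_conv_add_uminus)

lemma bit_poly_eq_add_iff: "(a :: bit poly) = b + c \<longleftrightarrow> b = a + c"
proof
  assume "a = b + c"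
  then show "b = a + c"
    by (simp only: add.assoc bit_poly_add_self add_0_right)
next
  assume "b = a + c"
  then show "a = b + c"
    by (simp only: add.assoc bit_poly_add_self add_0_right)
qed

lemma bit_poly_sum_add_sum:
  assumes "finite A" "finite B"
  shows "sum g A + sum g B = sum (g :: _ \<Rightarrow> bit poly) ((A - B) \<union> (B - A))"
proof -
  have "sum g A + sum g B =
      (sum g (A \<inter> B) + sum g (A - B)) + (sum g (A \<inter> B) + sum g (B - A))"
    using sum.Int_Diff[OF assms(1), of g B] sum.Int_Diff[OF assms(2), of g A]
    by (simp add: Int_commute)
  also have "\<dots> = (sum g (A \<inter> B) + sum g (A \<inter> B)) + (sum g (A - B) + sum g (B - A))"
    by (simp only: add_ac)
  also have "\<dots> = sum g ((A - B) \<union> (B - A))"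
    using assms by (simp add: sum.union_disjoint Diff_Int_distrib2)
  finally show ?thesis .
qed

lemma bit_poly_monic_expansion:
  assumes "f \<noteq> (0 :: bit poly)"
  shows "f = monom 1 (degree f) + (\<Sum>i = 1..degree f. monom (coeff f (degree f - i)) (degree f - i))"
proof -
  have lead: "lead_coeff f = 1"
    using assms by (metis bit_not_zero_iff leading_coeff_0_iff)
  have "f = (\<Sum>k<Suc (degree f). monom (coeff f k) k)"
    by (simp add: poly_as_sum_of_monoms lessThan_Suc_atMost)
  also have "\<dots> = monom 1 (degree f) + (\<Sum>k<degree f. monom (coeff f k) k)"
    using lead by (simp add: add.commute)
  also have "(\<Sum>k<degree f. monom (coeff f k) k) =
      (\<Sum>i = 1..degree f. monom (coeff f (degree f - i)) (degree f - i))"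
    by (rule sum.reindex_bij_witness[of _ "\<lambda>i. degree f - i" "\<lambda>k. degree f - k"]) auto
  finally show ?thesis .
qed

lemma bij_betw_coeff_list:
  assumes "N \<ge> 1"
  shows "bij_betw (\<lambda>p. map (coeff p) [0..<N]) {p :: 'a :: zero poly. degree p < N} {xs. length xs = N}"
proof (rule bij_betw_byWitness[where f' = Poly])
  show "\<forall>p \<in> {p. degree p < N}. Poly (map (coeff p) [0..<N]) = p"
    by (auto intro!: poly_eqI simp: nth_default_def coeff_eq_0)
  show "\<forall>xs \<in> {xs. length xs = N}. map (coeff (Poly xs)) [0..<N] = xs"
    by (auto intro!: nth_equalityI simp: nth_default_nth)
  show "(\<lambda>p. map (coeff p) [0..<N]) ` {p :: 'a poly. degree p < N} \<subseteq> {xs. length xs = N}"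
    by auto
  show "Poly ` {xs. length xs = N} \<subseteq> {p :: 'a poly. degree p < N}"
  proof
    fix p :: "'a poly"
    assume "p \<in> Poly ` {xs. length xs = N}"
    then obtain xs where p: "p = Poly xs" and "length xs = N"
      by blast
    then have "degree (Poly xs) \<le> N - 1"
      by (intro degree_le) (auto simp: nth_default_def)
    with assms p show "p \<in> {p. degree p < N}"
      by simp
  qed
qed
lemma card_degree_less:
  assumes "N \<ge> 1"
  shows "card {p :: 'a :: {zero, finite} poly. degree p < N} = CARD('a) ^ N"
proof -
  have "card {p :: 'a poly. degree p < N} = card {xs :: 'a list. length xs = N}"
    by (rule bij_betw_same_card[OF bij_betw_coeff_list[OF assms]])
  also have "\<dots> = CARD('a) ^ N"
    using card_lists_length_eq[of "UNIV :: 'a set" N] by simp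
  finally show ?thesis .
qed

lemma finite_degree_less: "finite {p :: 'a :: {zero, finite} poly. degree p < N}"
proof (cases "N = 0")
  case False
  have "finite {xs :: 'a list. length xs = N}"
    using finite_lists_length_eq[of "UNIV :: 'a set" N] by simp
  with False show ?thesis
    using bij_betw_finite[OF bij_betw_coeff_list[where 'a = 'a and N = N]] by simp
qed simp

lemma degree_mod_less_degree_pos:
  "0 < degree f \<Longrightarrow> degree (g mod f) < degree (f :: 'a :: field poly)"
  by (metis degree_0 degree_mod_less neq0_conv)

lemma irreducible_imp_degree_pos: "irreducible (f :: 'a :: field poly) \<Longrightarrow> 0 < degree f"
  by (metis irreducible_not_unit irreducible_def is_unit_iff_degree neq0_conv)

lemma residue_eqI:
  fixes a b f :: "'a :: field poly"
  assumes "degree a < degree f" "degree b < degree f" "f dvd a - b"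
  shows "a = b"
  using assms by (metis mod_eq_dvd_iff mod_poly_less)

(* bit has no gcd instance, so the invertibility of h modulo f is obtained by counting instead
  of from a Bezout identity. *)
lemma mult_mod_surj:
  assumes "prime_elem (f :: 'a :: {field, finite} poly)" "\<not> f dvd h"
  obtains g where "(h * g) mod f = c mod f"
proof -
  let ?K = "{g :: 'a poly. degree g < degree f}"
  have deg: "0 < degree f"
    using assms(1) by (simp add: irreducible_imp_degree_pos prime_elem_imp_irreducible)
  have "inj_on (\<lambda>g. (h * g) mod f) ?K"
  proof (rule inj_onI)
    fix a b assume "a \<in> ?K" "b \<in> ?K" "(h * a) mod f = (h * b) mod f"
    then have "f dvd h * (a - b)"
      by (simp add: mod_eq_dvd_iff right_diff_distrib)
    with assms have "f dvd a - b"
      by (metis prime_elem_dvd_multD)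
    with \<open>a \<in> ?K\<close> \<open>b \<in> ?K\<close> show "a = b"
      using residue_eqI by blast
  qed
  moreover have "(\<lambda>g. (h * g) mod f) ` ?K \<subseteq> ?K"
    using degree_mod_less_degree_pos[OF deg] by auto
  ultimately have "(\<lambda>g. (h * g) mod f) ` ?K = ?K"
    by (intro endo_inj_surj finite_degree_less)
  moreover have "c mod f \<in> ?K"
    using degree_mod_less_degree_pos[OF deg] by simp
  ultimately obtain g where "c mod f = (h * g) mod f"
    by (metis (no_types, lifting) imageE)
  then show ?thesis
    using that by simp
qed

(* The results of Distinct_Degree_Factorization are stated for 'a mod_ring; we transport them
  along the isomorphism between bit and bool mod_ring. *)

lemma mod_ring_bool_cases: "(x :: bool mod_ring) = 0 \<or> x = 1"
proof -
  obtain i where "i < 2" "x = of_nat i"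
    using surj_of_nat_mod_ring[of x] by auto
  then have "i = 0 \<or> i = 1"
    by arith
  with \<open>x = of_nat i\<close> show ?thesis
    by auto
qed

lemma mod_ring_bool_neq_0_iff: "(x :: bool mod_ring) \<noteq> 0 \<longleftrightarrow> x = 1"
  using mod_ring_bool_cases[of x] by auto

lemma mod_ring_bool_two_eq_0: "(2 :: bool mod_ring) = 0"
  using of_nat_card_eq_0[where 'a = bool] by (simp only: card_UNIV_bool of_nat_numeral)

definition bit_to_mod_ring :: "bit \<Rightarrow> bool mod_ring" where
  "bit_to_mod_ring b = (if b = 0 then 0 else 1)"

definition mod_ring_to_bit :: "bool mod_ring \<Rightarrow> bit" where
  "mod_ring_to_bit x = (if x = 0 then 0 else 1)"

interpretation bit_to_mod_ring: comm_ring_hom bit_to_mod_ring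
  by unfold_locales (auto simp: bit_to_mod_ring_def mod_ring_bool_two_eq_0)

interpretation mod_ring_to_bit: comm_ring_hom mod_ring_to_bit
proof unfold_locales
  fix x y :: "bool mod_ring"
  show "mod_ring_to_bit (x + y) = mod_ring_to_bit x + mod_ring_to_bit y"
    using mod_ring_bool_cases[of x] mod_ring_bool_cases[of y]
    by (auto simp: mod_ring_to_bit_def mod_ring_bool_two_eq_0)
  show "mod_ring_to_bit (x * y) = mod_ring_to_bit x * mod_ring_to_bit y"
    using mod_ring_bool_cases[of x] mod_ring_bool_cases[of y]
    by (auto simp: mod_ring_to_bit_def)
qed (simp_all add: mod_ring_to_bit_def)

interpretation bit_poly_to_mod_ring: map_poly_comm_ring_hom bit_to_mod_ring ..
interpretation mod_ring_poly_to_bit: map_poly_comm_ring_hom mod_ring_to_bit ..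

lemma map_poly_mod_ring_to_bit_inverse:
  "map_poly mod_ring_to_bit (map_poly bit_to_mod_ring p) = p"
  by (subst map_poly_map_poly)
    (auto simp: mod_ring_to_bit_def bit_to_mod_ring_def o_def intro!: map_poly_idI)

lemma map_poly_bit_to_mod_ring_inverse:
  "map_poly bit_to_mod_ring (map_poly mod_ring_to_bit p) = p"
  by (subst map_poly_map_poly)
    (auto simp: mod_ring_to_bit_def bit_to_mod_ring_def mod_ring_bool_neq_0_iff o_def
      intro!: map_poly_idI)

lemma degree_map_poly_bit_to_mod_ring [simp]:
  "degree (map_poly bit_to_mod_ring p) = degree p"
  by (metis degree_map_poly_le map_poly_mod_ring_to_bit_inverse le_antisym)

lemma map_poly_bit_to_mod_ring_dvd_iff [simp]:
  "map_poly bit_to_mod_ring f dvd map_poly bit_to_mod_ring g \<longleftrightarrow> f dvd g"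
  by (metis bit_poly_to_mod_ring.hom_dvd mod_ring_poly_to_bit.hom_dvd
      map_poly_mod_ring_to_bit_inverse)

lemma irreducible_map_poly_bit_to_mod_ring:
  assumes "irreducible f"
  shows "irreducible (map_poly bit_to_mod_ring f)"
proof (rule irreducibleI)
  show "map_poly bit_to_mod_ring f \<noteq> 0"
    using assms
    by (metis irreducible_def mod_ring_poly_to_bit.hom_zero map_poly_mod_ring_to_bit_inverse)
  show "\<not> map_poly bit_to_mod_ring f dvd 1"
    using assms
    by (metis irreducible_def mod_ring_poly_to_bit.hom_dvd_1 map_poly_mod_ring_to_bit_inverse)
next
  fix a b
  assume "map_poly bit_to_mod_ring f = a * b"
  then have "f = map_poly mod_ring_to_bit a * map_poly mod_ring_to_bit b"
    by (metis mod_ring_poly_to_bit.hom_mult map_poly_mod_ring_to_bit_inverse)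
  then have "is_unit (map_poly mod_ring_to_bit a) \<or> is_unit (map_poly mod_ring_to_bit b)"
    using assms irreducibleD by blast
  then show "is_unit a \<or> is_unit b"
    by (metis bit_poly_to_mod_ring.hom_dvd_1 map_poly_bit_to_mod_ring_inverse)
qed

lemma map_poly_bit_to_mod_ring_X_pow_minus_X:
  "map_poly bit_to_mod_ring (monom 1 1 ^ k - monom 1 1) = monom 1 1 ^ k - monom 1 1"
  by (simp add: bit_poly_to_mod_ring.hom_power bit_poly_to_mod_ring.hom_minus bit_to_mod_ring_def)

lemma irreducible_dvd_X_pow_two_pow_degree:
  assumes "irreducible (f :: bit poly)"
  shows "f dvd monom 1 1 ^ (2 ^ degree f) - monom 1 1"
proof -
  have "map_poly bit_to_mod_ring f dvd
      monom 1 1 ^ (CARD(bool) ^ degree (map_poly bit_to_mod_ring f)) - monom 1 1"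
    by (rule degree_divisor(1)[OF irreducible_map_poly_bit_to_mod_ring[OF assms] refl])
  then show ?thesis
    unfolding card_UNIV_bool degree_map_poly_bit_to_mod_ring
      map_poly_bit_to_mod_ring_X_pow_minus_X[symmetric] map_poly_bit_to_mod_ring_dvd_iff .
qed

lemma irreducible_not_dvd_X_pow_two_pow:
  assumes "irreducible (f :: bit poly)" "1 \<le> c" "c < degree f"
  shows "\<not> f dvd monom 1 1 ^ (2 ^ c) - monom 1 1"
proof -
  have "c < degree (map_poly bit_to_mod_ring f)"
    using assms(3) by simp
  then have "\<not> map_poly bit_to_mod_ring f dvd monom 1 1 ^ (CARD(bool) ^ c) - monom 1 1"
    by (rule degree_divisor(2)[OF irreducible_map_poly_bit_to_mod_ring[OF assms(1)] refl assms(2)])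
  then show ?thesis
    unfolding card_UNIV_bool map_poly_bit_to_mod_ring_X_pow_minus_X[symmetric]
      map_poly_bit_to_mod_ring_dvd_iff .
qed

section \<open>The exponent of an irreducible polynomial\<close>

lemma X_pow_minus_X_eq:
  assumes "0 < k"
  shows "monom 1 1 ^ k - monom 1 1 = monom 1 1 * (monom 1 (k - 1) - (1 :: 'a :: comm_ring_1 poly))"
proof -
  have "1 + (k - 1) = k"
    using assms by simp
  then show ?thesis
    unfolding x_pow_n by (simp add: right_diff_distrib mult_monom)
qed

lemma irreducible_not_dvd_X:
  assumes "irreducible (f :: bit poly)" "f \<noteq> [:0, 1:]"
  shows "\<not> f dvd monom 1 1"
proof
  assume "f dvd monom 1 1"
  then obtain c where c: "monom 1 1 = f * c"
    by (elim dvdE)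
  then have "f \<noteq> 0" "c \<noteq> 0"
    by auto
  then have "degree f + degree c = degree (monom (1 :: bit) 1)"
    unfolding c by (rule degree_mult_eq[symmetric])
  then have "degree f + degree c = 1"
    by (simp add: degree_monom_eq)
  with irreducible_imp_degree_pos[OF assms(1)] have "degree c = 0"
    by simp
  moreover have "lead_coeff c = 1"
    using \<open>c \<noteq> 0\<close> by (metis bit_not_zero_iff leading_coeff_0_iff)
  ultimately have "c = 1"
    by (metis degree_0_id one_pCons)
  with c have "f = monom 1 1"
    by simp
  with assms(2) show False
    by (metis x_as_monom)
qed

lemma dvd_X_pow_mult_iff:
  assumes "irreducible (f :: bit poly)" "f \<noteq> [:0, 1:]"
  shows "f dvd monom 1 k * g \<longleftrightarrow> f dvd g"
proof
  have prime: "prime_elem f"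
    using assms(1) by (rule field_poly_irreducible_imp_prime)
  assume "f dvd monom 1 k * g"
  then have "f dvd monom 1 1 ^ k \<or> f dvd g"
    using prime_elem_dvd_multD[OF prime] unfolding x_pow_n by blast
  then show "f dvd g"
    using prime_elem_dvd_power[OF prime] irreducible_not_dvd_X[OF assms] by blast
qed simp

lemma irreducible_dvd_X_pow_minus_one:
  assumes "irreducible (f :: bit poly)" "f \<noteq> [:0, 1:]"
  shows "f dvd monom 1 (2 ^ degree f - 1) - 1"
proof -
  have "f dvd monom 1 1 ^ (2 ^ degree f) - monom 1 1"
    by (rule irreducible_dvd_X_pow_two_pow_degree[OF assms(1)])
  then show ?thesis
    unfolding X_pow_minus_X_eq[OF zero_less_power[OF zero_less_numeral]]
      dvd_X_pow_mult_iff[OF assms] .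
qed

lemma
  assumes "irreducible (f :: bit poly)" "f \<noteq> [:0, 1:]"
  shows poly_exponent_pos: "0 < poly_exponent f"
    and dvd_X_pow_poly_exponent_minus_one: "f dvd monom 1 (poly_exponent f) - 1"
proof -
  have "0 < (2 :: nat) ^ degree f - 1"
    using irreducible_imp_degree_pos[OF assms(1)] one_less_power[of "2 :: nat" "degree f"] by simp
  with irreducible_dvd_X_pow_minus_one[OF assms] have "\<exists>e. 0 < e \<and> f dvd monom 1 e - 1"
    by blast
  from LeastI_ex[OF this] show "0 < poly_exponent f" "f dvd monom 1 (poly_exponent f) - 1"
    unfolding poly_exponent_def by auto
qed

lemma X_pow_mod_poly_exponent:
  assumes "irreducible (f :: bit poly)" "f \<noteq> [:0, 1:]"
  shows "monom 1 d mod f = monom 1 (d mod poly_exponent f) mod f"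
proof -
  let ?e = "poly_exponent f" and ?q = "d div poly_exponent f"
  have one: "monom 1 ?e mod f = 1 mod f"
    using dvd_X_pow_poly_exponent_minus_one[OF assms] by (simp add: mod_eq_dvd_iff)
  have "monom 1 (?e * ?q) mod f = (monom 1 ?e) ^ ?q mod f"
    by (simp add: monom_power)
  also have "\<dots> = (monom 1 ?e mod f) ^ ?q mod f"
    by (rule power_mod[symmetric])
  also have "\<dots> = 1 mod f"
    by (simp add: one power_mod)
  finally have period: "monom 1 (?e * ?q) mod f = 1 mod f" .
  have "monom 1 d = monom 1 (d mod ?e) * (monom 1 (?e * ?q) :: bit poly)"
    by (simp add: mult_monom)
  then have "monom 1 d mod f = (monom 1 (d mod ?e) * (monom 1 (?e * ?q) mod f)) mod f"
    by (simp add: mod_mult_right_eq)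
  also have "\<dots> = monom 1 (d mod ?e) mod f"
    by (simp only: period mod_mult_right_eq mult_1_right)
  finally show ?thesis .
qed

lemma dvd_X_pow_minus_one_iff:
  assumes "irreducible (f :: bit poly)" "f \<noteq> [:0, 1:]"
  shows "f dvd monom 1 d - 1 \<longleftrightarrow> poly_exponent f dvd d"
proof -
  let ?e = "poly_exponent f"
  have "f dvd monom 1 d - 1 \<longleftrightarrow> f dvd monom 1 (d mod ?e) - 1"
    by (simp only: mod_eq_dvd_iff[symmetric] X_pow_mod_poly_exponent[OF assms, of d])
  also have "\<dots> \<longleftrightarrow> d mod ?e = 0"
  proof
    assume "f dvd monom 1 (d mod ?e) - 1"
    moreover have "d mod ?e < ?e"
      using poly_exponent_pos[OF assms] by simp
    then have "\<not> (0 < d mod ?e \<and> f dvd monom 1 (d mod ?e) - 1)"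
      unfolding poly_exponent_def by (rule not_less_Least)
    ultimately show "d mod ?e = 0"
      by simp
  qed (simp add: monom_0)
  finally show ?thesis
    by (simp only: dvd_eq_mod_eq_0[of "poly_exponent f" d])
qed

lemma poly_exponent_dvd_two_pow_degree:
  assumes "irreducible (f :: bit poly)" "f \<noteq> [:0, 1:]"
  shows "poly_exponent f dvd 2 ^ degree f - 1"
  using irreducible_dvd_X_pow_minus_one[OF assms] by (simp add: dvd_X_pow_minus_one_iff[OF assms])

lemma odd_poly_exponent:
  assumes "irreducible (f :: bit poly)" "f \<noteq> [:0, 1:]"
  shows "odd (poly_exponent f)"
proof
  assume "even (poly_exponent f)"
  then have "even ((2 :: nat) ^ degree f - 1)"
    using poly_exponent_dvd_two_pow_degree[OF assms] by (rule dvd_trans)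
  with irreducible_imp_degree_pos[OF assms(1)] show False
    by simp
qed

lemma poly_exponent_dvd_imp_degree_le:
  assumes "irreducible (f :: bit poly)" "f \<noteq> [:0, 1:]"
    and "1 \<le> J" "poly_exponent f dvd 2 ^ J - 1"
  shows "degree f \<le> J"
proof (rule ccontr)
  assume "\<not> degree f \<le> J"
  have "f dvd monom 1 (2 ^ J - 1) - 1"
    using assms(4) by (simp add: dvd_X_pow_minus_one_iff[OF assms(1,2)])
  then have "f dvd monom 1 1 ^ (2 ^ J) - monom 1 1"
    unfolding X_pow_minus_X_eq[OF zero_less_power[OF zero_less_numeral]]
      dvd_X_pow_mult_iff[OF assms(1,2)] .
  with irreducible_not_dvd_X_pow_two_pow[OF assms(1,3)] \<open>\<not> degree f \<le> J\<close> show False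
    by simp
qed

(* With J = n * totient l, 2 ^ J = 1 modulo both coprime factors of the exponent, so f divides
  x^(2^J) - x and hence deg f = nm \<le> J. *)
lemma le_poly_exponent_cofactor:
  fixes f :: "bit poly" and n m l :: nat
  assumes "irreducible f" "f \<noteq> [:0, 1:]" "1 \<le> n" "degree f = n * m"
    and "poly_exponent f = (2 ^ n - 1) * l" "coprime (2 ^ n - 1) l"
  shows "m \<le> l"
proof -
  have "0 < l"
    using poly_exponent_pos[OF assms(1,2)] assms(5) by simp
  have "odd l"
    using odd_poly_exponent[OF assms(1,2)] assms(5) by simp
  define J where "J = n * totient l"
  have "[2 ^ totient l = 1] (mod l)"
    using \<open>odd l\<close> by (intro euler_theorem) simp
  then have "[(2 ^ totient l) ^ n = 1 ^ n] (mod l)"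
    by (rule cong_pow)
  then have cong_l: "[2 ^ J = 1] (mod l)"
    by (simp only: J_def mult.commute[of n] power_mult power_one)
  have "[(2 :: nat) ^ n = 1] (mod 2 ^ n - 1)"
    by (simp add: cong_altdef_nat)
  then have "[((2 :: nat) ^ n) ^ totient l = 1 ^ totient l] (mod 2 ^ n - 1)"
    by (rule cong_pow)
  then have cong_r: "[(2 :: nat) ^ J = 1] (mod 2 ^ n - 1)"
    by (simp only: J_def power_mult power_one)
  have "[2 ^ J = 1] (mod poly_exponent f)"
    unfolding assms(5) using cong_r cong_l assms(6) by (rule coprime_cong_mult_nat)
  then have "poly_exponent f dvd 2 ^ J - 1"
    by (simp add: cong_altdef_nat)
  moreover have "1 \<le> J"
    using \<open>0 < l\<close> assms(3) by (simp add: J_def Suc_le_eq)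
  ultimately have "degree f \<le> J"
    using poly_exponent_dvd_imp_degree_le[OF assms(1,2)] by blast
  then have "m \<le> totient l"
    using assms(3,4) by (simp add: J_def)
  then show ?thesis
    using totient_le order_trans by blast
qed

section \<open>Sequences of the recurrence\<close>

definition poly_seq :: "'a :: field poly \<Rightarrow> 'a poly \<Rightarrow> nat \<Rightarrow> 'a" where
  "poly_seq f h j = coeff ((h * monom 1 j) mod f) (degree f - 1)"

lemma poly_seq_0 [simp]: "poly_seq f 0 j = 0"
  by (simp add: poly_seq_def)

lemma poly_seq_add: "poly_seq f (a + b) j = poly_seq f a j + poly_seq f b j"
  by (simp add: poly_seq_def distrib_right poly_mod_add_left)

lemma poly_seq_diff: "poly_seq f (a - b) j = poly_seq f a j - poly_seq f b j"
  by (simp add: poly_seq_def left_diff_distrib poly_mod_diff_left)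

lemma poly_seq_sum: "poly_seq f (\<Sum>i\<in>A. g i) j = (\<Sum>i\<in>A. poly_seq f (g i) j)"
  by (induction A rule: infinite_finite_induct) (simp_all add: poly_seq_add)

lemma poly_seq_mult_monom: "poly_seq f (h * monom c k) j = c * poly_seq f h (j + k)"
proof -
  have "monom c (j + k) = Polynomial.smult c (monom 1 (j + k))"
    by (simp add: smult_monom)
  then have "h * monom c k * monom 1 j = Polynomial.smult c (h * monom 1 (j + k))"
    by (simp add: mult_monom mult.assoc add.commute)
  then show ?thesis
    by (simp add: poly_seq_def mod_smult_left)
qed

lemma shift_seq_poly_seq: "shift_seq d (poly_seq f h) = poly_seq f (h * monom 1 d)"
  by (simp add: fun_eq_iff shift_seq_def poly_seq_mult_monom)

lemma poly_seq_mod_cong: "a mod f = b mod f \<Longrightarrow> poly_seq f a = poly_seq f b"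
  unfolding fun_eq_iff poly_seq_def by (metis mod_mult_left_eq)

lemma poly_seq_dvd: "f dvd h \<Longrightarrow> poly_seq f h j = 0"
  unfolding poly_seq_def by (metis dvd_mult2 dvd_imp_mod_0 coeff_0)

lemma poly_seq_mult: "poly_seq f (h * g) 0 = (\<Sum>i\<le>degree g. coeff g i * poly_seq f h i)"
proof -
  have "poly_seq f (h * g) 0 = poly_seq f (\<Sum>i\<le>degree g. h * monom (coeff g i) i) 0"
    by (subst (1) poly_as_sum_of_monoms[symmetric]) (simp add: sum_distrib_left)
  then show ?thesis
    by (simp add: poly_seq_sum poly_seq_mult_monom)
qed

lemma poly_seq_eq_0_iff:
  assumes "irreducible (f :: 'a :: {field, finite} poly)"
  shows "poly_seq f h = (\<lambda>_. 0) \<longleftrightarrow> f dvd h"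
proof
  assume zero: "poly_seq f h = (\<lambda>_. 0)"
  show "f dvd h"
  proof (rule ccontr)
    assume "\<not> f dvd h"
    obtain g where "(h * g) mod f = monom 1 (degree f - 1) mod f"
      using mult_mod_surj[OF field_poly_irreducible_imp_prime[OF assms] \<open>\<not> f dvd h\<close>,
          where c = "monom 1 (degree f - 1)"] by blast
    then have "poly_seq f (h * g) 0 = poly_seq f (monom 1 (degree f - 1)) 0"
      by (metis poly_seq_mod_cong)
    also have "\<dots> = 1"
      using irreducible_imp_degree_pos[OF assms]
      by (simp add: poly_seq_def mod_poly_less degree_monom_eq)
    finally show False
      using zero poly_seq_mult[of f h g] by simp
  qed
qed (simp add: fun_eq_iff poly_seq_dvd)

lemma poly_seq_eq_iff:
  assumes "irreducible (f :: 'a :: {field, finite} poly)"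
  shows "poly_seq f a = poly_seq f b \<longleftrightarrow> f dvd a - b"
  using poly_seq_eq_0_iff[OF assms, of "a - b"] by (simp add: fun_eq_iff poly_seq_diff)

lemma poly_seq_mod_poly_exponent:
  assumes "irreducible (f :: bit poly)" "f \<noteq> [:0, 1:]"
  shows "poly_seq f h (j mod poly_exponent f) = poly_seq f h j"
proof -
  have "(h * monom 1 j) mod f = (h * monom 1 (j mod poly_exponent f)) mod f"
    by (metis X_pow_mod_poly_exponent[OF assms] mod_mult_right_eq)
  then show ?thesis
    by (simp add: poly_seq_def)
qed

lemma shift_seq_poly_seq_eq_iff:
  assumes "irreducible (f :: bit poly)" "f \<noteq> [:0, 1:]" "\<not> f dvd h"
  shows "shift_seq d1 (poly_seq f h) = shift_seq d2 (poly_seq f h) \<longleftrightarrow>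
    [d1 = d2] (mod poly_exponent f)"
proof -
  have *: "shift_seq d1 (poly_seq f h) = shift_seq d2 (poly_seq f h) \<longleftrightarrow>
      [d1 = d2] (mod poly_exponent f)" if "d1 \<le> d2" for d1 d2
  proof -
    have eq: "h * monom 1 d1 - h * monom 1 d2 = monom 1 d1 * (h * (monom 1 (d2 - d1) - 1))"
      using that by (simp add: bit_poly_diff_eq_add algebra_simps mult_monom)
    have "shift_seq d1 (poly_seq f h) = shift_seq d2 (poly_seq f h) \<longleftrightarrow>
        f dvd h * monom 1 d1 - h * monom 1 d2"
      by (simp add: shift_seq_poly_seq poly_seq_eq_iff[OF assms(1)])
    also have "\<dots> \<longleftrightarrow> f dvd h * (monom 1 (d2 - d1) - 1)"
      unfolding eq dvd_X_pow_mult_iff[OF assms(1,2)] ..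
    also have "\<dots> \<longleftrightarrow> f dvd monom 1 (d2 - d1) - 1"
      using assms(3) prime_elem_dvd_mult_iff[OF field_poly_irreducible_imp_prime[OF assms(1)]]
      by blast
    also have "\<dots> \<longleftrightarrow> [d1 = d2] (mod poly_exponent f)"
      by (simp add: dvd_X_pow_minus_one_iff[OF assms(1,2)] cong_altdef_nat[OF that]
          cong_sym_eq[of d1 d2])
    finally show ?thesis .
  qed
  show ?thesis
  proof (cases "d1 \<le> d2")
    case False
    then have "d2 \<le> d1"
      by simp
    from *[OF this] show ?thesis
      by (metis cong_sym_eq)
  qed (rule *)
qed

lemma lfsr_seq_poly_seq:
  assumes "f \<noteq> (0 :: bit poly)"
  shows "lfsr_seq f (poly_seq f h)"
  unfolding lfsr_seq_def
proof (intro allI impI)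
  fix j
  assume j: "degree f \<le> j"
  define N where "N = degree f"
  define S where "S = (\<Sum>i = 1..N. monom (coeff f (N - i)) (N - i))"
  define A where "A = h * monom 1 (j - N)"
  have "monom 1 N = f + S"
    using bit_poly_monic_expansion[OF assms] bit_poly_eq_add_iff unfolding N_def S_def by blast
  moreover have "h * monom 1 j = A * monom 1 N"
    using j by (simp add: A_def N_def mult.assoc mult_monom)
  ultimately have split: "h * monom 1 j = A * f + A * S"
    by (simp only: distrib_left)
  have "A * S = (\<Sum>i = 1..N. h * monom (coeff f (N - i)) (j - i))"
    unfolding A_def S_def sum_distrib_left
  proof (intro sum.cong refl)
    fix i
    assume "i \<in> {1..N}"
    with j have "j - N + (N - i) = j - i"
      by (simp add: N_def)
    then show "h * monom 1 (j - N) * monom (coeff f (N - i)) (N - i) =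
        h * monom (coeff f (N - i)) (j - i)"
      by (simp add: mult.assoc mult_monom)
  qed
  then have sum: "poly_seq f (A * S) 0 = (\<Sum>i = 1..N. coeff f (N - i) * poly_seq f h (j - i))"
    by (simp add: poly_seq_sum poly_seq_mult_monom)
  have "poly_seq f h j = poly_seq f (h * monom 1 j) 0"
    by (simp only: poly_seq_mult_monom mult.left_neutral add_0_left)
  also have "\<dots> = poly_seq f (A * f) 0 + poly_seq f (A * S) 0"
    by (simp only: split poly_seq_add)
  also have "\<dots> = poly_seq f (A * S) 0"
    by (simp only: poly_seq_dvd[OF dvd_triv_right] add_0_left)
  finally show "poly_seq f h j = (\<Sum>i = 1..degree f. coeff f (degree f - i) * poly_seq f h (j - i))"
    by (simp only: sum N_def)
qed

lemma lfsr_seq_eqI: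
  assumes "lfsr_seq f s" "lfsr_seq f t" "\<And>i. i < degree f \<Longrightarrow> s i = t i"
  shows "s = t"
proof
  fix j
  show "s j = t j"
  proof (induction j rule: less_induct)
    case (less j)
    show ?case
    proof (cases "j < degree f")
      case False
      have "s j = (\<Sum>i = 1..degree f. coeff f (degree f - i) * s (j - i))"
        using assms(1) False unfolding lfsr_seq_def by simp
      also have "\<dots> = (\<Sum>i = 1..degree f. coeff f (degree f - i) * t (j - i))"
        using less False by (intro sum.cong) auto
      also have "\<dots> = t j"
        using assms(2) False unfolding lfsr_seq_def by simp
      finally show ?thesis .
    qed (rule assms(3))
  qed
qed

lemma
  shows finite_lfsr_seqs: "finite {s. lfsr_seq f s}"
    and card_lfsr_seqs_le: "card {s. lfsr_seq f s} \<le> 2 ^ degree f"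
proof -
  let ?V = "{s. lfsr_seq f s}" and ?L = "{xs :: bit list. length xs = degree f}"
  have inj: "inj_on (\<lambda>s. map s [0..<degree f]) ?V"
  proof (rule inj_onI)
    fix s t
    assume "s \<in> ?V" "t \<in> ?V" "map s [0..<degree f] = map t [0..<degree f]"
    then show "s = t"
      by (intro lfsr_seq_eqI[of f]) (auto simp: map_eq_conv)
  qed
  have sub: "(\<lambda>s. map s [0..<degree f]) ` ?V \<subseteq> ?L"
    by auto
  have fin: "finite ?L"
    using finite_lists_length_eq[of "UNIV :: bit set"] by simp
  show "finite ?V"
    using finite_imageD[OF finite_subset[OF sub fin] inj] .
  have "card ?V \<le> card ?L"
    using card_image[OF inj] card_mono[OF fin sub] by simp
  also have "card ?L = 2 ^ degree f"
    using card_lists_length_eq[of "UNIV :: bit set"] by simp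
  finally show "card ?V \<le> 2 ^ degree f" .
qed

lemma lfsr_seq_imp_poly_seq:
  assumes "irreducible (f :: bit poly)" "lfsr_seq f s"
  obtains h where "s = poly_seq f h"
proof -
  let ?K = "{h :: bit poly. degree h < degree f}"
  have deg: "1 \<le> degree f"
    using irreducible_imp_degree_pos[OF assms(1)] by simp
  have inj: "inj_on (poly_seq f) ?K"
    by (rule inj_onI) (simp add: poly_seq_eq_iff[OF assms(1)] residue_eqI)
  moreover have "poly_seq f ` ?K \<subseteq> {s. lfsr_seq f s}"
    using deg lfsr_seq_poly_seq[of f] by fastforce
  moreover have "card {s. lfsr_seq f s} \<le> card (poly_seq f ` ?K)"
    using card_image[OF inj] card_degree_less[where 'a = bit, OF deg] card_lfsr_seqs_le[of f]
    by simp
  ultimately have "poly_seq f ` ?K = {s. lfsr_seq f s}"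
    by (intro card_seteq finite_lfsr_seqs)
  with assms(2) that show ?thesis
    by blast
qed

section \<open>Folding sequences into arrays\<close>

lemma bij_betw_mod_pair:
  fixes r l :: nat
  assumes "coprime r l"
  shows "bij_betw (\<lambda>i. (i mod r, i mod l)) {..<r * l} ({..<r} \<times> {..<l})"
proof -
  have inj: "inj_on (\<lambda>i. (i mod r, i mod l)) {..<r * l}"
  proof (rule inj_onI)
    fix i j
    assume ij: "i \<in> {..<r * l}" "j \<in> {..<r * l}" "(i mod r, i mod l) = (j mod r, j mod l)"
    then have "[i = j] (mod r)" "[i = j] (mod l)"
      by (simp_all add: cong_def)
    then have "[i = j] (mod r * l)"
      using assms by (rule coprime_cong_mult_nat)
    with ij show "i = j"
      by (simp add: cong_less_modulus_unique_nat)
  qed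
  have sub: "(\<lambda>i. (i mod r, i mod l)) ` {..<r * l} \<subseteq> {..<r} \<times> {..<l}"
  proof
    fix x
    assume "x \<in> (\<lambda>i. (i mod r, i mod l)) ` {..<r * l}"
    then obtain i where "x = (i mod r, i mod l)" "i < r * l"
      by auto
    moreover from \<open>i < r * l\<close> have "0 < r * l"
      by linarith
    ultimately show "x \<in> {..<r} \<times> {..<l}"
      by simp
  qed
  have "card ((\<lambda>i. (i mod r, i mod l)) ` {..<r * l}) = card ({..<r} \<times> {..<l})"
    using card_image[OF inj] by (simp add: card_cartesian_product)
  with sub have "(\<lambda>i. (i mod r, i mod l)) ` {..<r * l} = {..<r} \<times> {..<l}"
    by (intro card_subset_eq) simp_all
  with inj show ?thesis
    by (simp add: bij_betw_def)
qed

lemma mod_pair_surj: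
  fixes r l :: nat
  assumes "coprime r l" "a < r" "b < l"
  obtains i where "i < r * l" "i mod r = a" "i mod l = b"
proof -
  have "(a, b) \<in> (\<lambda>i. (i mod r, i mod l)) ` {..<r * l}"
    using bij_betw_imp_surj_on[OF bij_betw_mod_pair[OF assms(1)]] assms(2,3) by simp
  with that show ?thesis
    by blast
qed

lemma fold_arr_mod_pair:
  assumes "coprime r l" "i < r * l"
  shows "fold_arr r l s (i mod r) (i mod l) = s i"
proof -
  have "(THE k. k < r * l \<and> k mod r = i mod r \<and> k mod l = i mod l) = i"
    using bij_betw_mod_pair[OF assms(1)] assms(2)
    by (intro the_equality) (auto simp: bij_betw_def inj_on_def)
  moreover have "0 < r * l"
    using assms(2) by linarith
  ultimately show ?thesis
    by (simp add: fold_arr_def)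
qed

lemma is_array_fold_arr: "is_array r l (fold_arr r l s)"
  by (simp add: is_array_def fold_arr_def)

lemma add_arr_fold_arr: "add_arr (fold_arr r l s) (fold_arr r l t) = fold_arr r l (\<lambda>j. s j + t j)"
  by (simp add: fun_eq_iff add_arr_def fold_arr_def)

lemma fold_arr_shift_seq:
  assumes "coprime r l" "\<And>j. s (j mod (r * l)) = s j"
  shows "fold_arr r l (shift_seq d s) = shift_arr r l (d mod r) (d mod l) (fold_arr r l s)"
proof (intro ext)
  fix a b
  show "fold_arr r l (shift_seq d s) a b = shift_arr r l (d mod r) (d mod l) (fold_arr r l s) a b"
  proof (cases "a < r \<and> b < l")
    case True
    then obtain i where i: "i < r * l" "i mod r = a" "i mod l = b"
      using mod_pair_surj[OF assms(1)] by blast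
    define k where "k = (i + d) mod (r * l)"
    have "0 < r * l"
      using i(1) by linarith
    then have k: "k < r * l" "k mod r = (a + d mod r) mod r" "k mod l = (b + d mod l) mod l"
      unfolding k_def i(2,3)[symmetric] by (simp_all add: mod_mod_cancel mod_add_eq)
    have "shift_arr r l (d mod r) (d mod l) (fold_arr r l s) a b =
        fold_arr r l s (k mod r) (k mod l)"
      using True by (simp add: shift_arr_def k)
    also have "\<dots> = s k"
      by (rule fold_arr_mod_pair[OF assms(1) k(1)])
    also have "\<dots> = s (i + d)"
      unfolding k_def by (rule assms(2))
    also have "\<dots> = fold_arr r l (shift_seq d s) a b"
      using fold_arr_mod_pair[OF assms(1) i(1), of "shift_seq d s"] i by (simp add: shift_seq_def)
    finally show ?thesis
      by (rule sym)
  qed (auto simp: fold_arr_def shift_arr_def)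
qed

lemma window_shift_arr:
  assumes "p < r" "q < t"
  shows "window r t n m A p q = window r t n m (shift_arr r t p q A) 0 0"
proof (intro ext)
  fix u v
  have "u mod r < r" "v mod t < t"
    using assms by simp_all
  moreover have "(u mod r + p) mod r = (p + u) mod r" "(v mod t + q) mod t = (q + v) mod t"
    by (simp_all add: mod_add_right_eq add.commute)
  ultimately show "window r t n m A p q u v = window r t n m (shift_arr r t p q A) 0 0 u v"
    by (simp add: window_def shift_arr_def)
qed

lemma window_positions_0_0:
  "window_positions r l n m 0 0 = {i. i < r * l \<and> i mod r < n \<and> i mod l < m}"
  by (auto simp: window_positions_def simp flip: of_nat_mod)

lemma card_window_positions_0_0:
  assumes "coprime r l" "n \<le> r" "m \<le> l"
  shows "card (window_positions r l n m 0 0) = n * m"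
proof -
  have "bij_betw (\<lambda>i. (i mod r, i mod l)) (window_positions r l n m 0 0) ({..<n} \<times> {..<m})"
  proof (rule bij_betw_subset[OF bij_betw_mod_pair[OF assms(1)]])
    show "window_positions r l n m 0 0 \<subseteq> {..<r * l}"
      by (auto simp: window_positions_0_0)
    show "(\<lambda>i. (i mod r, i mod l)) ` window_positions r l n m 0 0 = {..<n} \<times> {..<m}"
    proof
      show "(\<lambda>i. (i mod r, i mod l)) ` window_positions r l n m 0 0 \<subseteq> {..<n} \<times> {..<m}"
        by (auto simp: window_positions_0_0)
      show "{..<n} \<times> {..<m} \<subseteq> (\<lambda>i. (i mod r, i mod l)) ` window_positions r l n m 0 0"
      proof
        fix x
        assume "x \<in> {..<n} \<times> {..<m}"
        then obtain u v where x: "x = (u, v)" "u < n" "v < m"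
          by blast
        with assms(2,3) have "u < r" "v < l"
          by linarith+
        then obtain i where i: "i < r * l" "i mod r = u" "i mod l = v"
          using mod_pair_surj[OF assms(1)] by blast
        with x have "i \<in> window_positions r l n m 0 0"
          by (simp add: window_positions_0_0)
        moreover have "x = (i mod r, i mod l)"
          using x i by simp
        ultimately show "x \<in> (\<lambda>i. (i mod r, i mod l)) ` window_positions r l n m 0 0"
          by (rule rev_image_eqI)
      qed
    qed
  qed
  then show ?thesis
    by (simp add: bij_betw_same_card card_cartesian_product)
qed

lemma bij_betw_array_support:
  "bij_betw (\<lambda>M. {(u, v). M u v = 1}) {M. is_array n m M} (Pow ({..<n} \<times> {..<m}))"
proof (rule bij_betw_byWitness[where f' = "\<lambda>Q u v. if (u, v) \<in> Q then 1 else 0"])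
  show "\<forall>M \<in> {M. is_array n m M}.
      (\<lambda>u v. if (u, v) \<in> {(u, v). M u v = 1} then 1 else 0) = M"
    by (auto simp: fun_eq_iff)
  show "\<forall>Q \<in> Pow ({..<n} \<times> {..<m}).
      {(u, v). (if (u, v) \<in> Q then 1 else 0) = (1 :: bit)} = Q"
    by auto
  show "(\<lambda>M. {(u, v). M u v = 1}) ` {M. is_array n m M} \<subseteq> Pow ({..<n} \<times> {..<m})"
    by (auto simp: is_array_def) (metis zero_neq_one)+
  show "(\<lambda>Q u v. if (u, v) \<in> Q then 1 else 0) ` Pow ({..<n} \<times> {..<m}) \<subseteq>
      {M. is_array n m M}"
    by (auto simp: is_array_def)
qed

lemma finite_arrays: "finite {M. is_array n m M}"
  using bij_betw_finite[OF bij_betw_array_support] by simp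

lemma card_arrays: "card {M. is_array n m M} = 2 ^ (n * m)"
  using bij_betw_same_card[OF bij_betw_array_support]
  by (simp add: card_Pow card_cartesian_product)

section \<open>The folded arrays form a PRAC\<close>

(* Only the window at (0,0) enters the hypotheses: every other window of a folded array is the
  (0,0)-window of a shifted sequence (window_fold_arr_poly_seq). *)
locale folded_lfsr =
  fixes f :: "bit poly" and r l n m :: nat
  assumes irreducible: "irreducible f"
    and not_X: "f \<noteq> [:0, 1:]"
    and degree_eq: "degree f = n * m"
    and exponent_eq: "poly_exponent f = r * l"
    and coprime: "coprime r l"
    and n_le_r: "n \<le> r"
    and m_le_l: "m \<le> l"
    and window_condition: "\<not> f dvd g_poly (window_positions r l n m 0 0)"
begin

lemma degree_pos: "0 < degree f"
  using irreducible by (rule irreducible_imp_degree_pos)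

lemma r_pos: "0 < r" and l_pos: "0 < l"
  using poly_exponent_pos[OF irreducible not_X] exponent_eq by simp_all

lemma f_nonzero: "f \<noteq> 0"
  using degree_pos by auto

lemma fold_arr_shift_poly_seq:
  "fold_arr r l (shift_seq d (poly_seq f h)) =
    shift_arr r l (d mod r) (d mod l) (fold_arr r l (poly_seq f h))"
proof (rule fold_arr_shift_seq[OF coprime])
  show "poly_seq f h (j mod (r * l)) = poly_seq f h j" for j
    using poly_seq_mod_poly_exponent[OF irreducible not_X] exponent_eq by metis
qed

definition corner_window :: "bit poly \<Rightarrow> nat \<Rightarrow> nat \<Rightarrow> bit" where
  "corner_window h = window r l n m (fold_arr r l (poly_seq f h)) 0 0"

lemma window_fold_arr_poly_seq:
  assumes "p < r" "q < l" "d mod r = p" "d mod l = q"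
  shows "window r l n m (fold_arr r l (poly_seq f h)) p q = corner_window (h * monom 1 d)"
  using window_shift_arr[OF assms(1,2)] fold_arr_shift_poly_seq[of d h] assms(3,4)
  by (simp add: corner_window_def shift_seq_poly_seq)

lemma corner_window_mod_pair:
  assumes "i \<in> window_positions r l n m 0 0"
  shows "corner_window h (i mod r) (i mod l) = poly_seq f h i"
  using assms r_pos l_pos
  by (simp add: corner_window_def window_def window_positions_0_0 fold_arr_mod_pair[OF coprime])

lemma corner_window_add: "corner_window (a + b) u v = corner_window a u v + corner_window b u v"
  by (simp add: corner_window_def window_def fold_arr_def poly_seq_add)

lemma is_array_corner_window: "is_array n m (corner_window h)"
  by (simp add: is_array_def corner_window_def window_def)

lemma residues_spanned_by_window_positions:
  "(\<lambda>Q. (\<Sum>i\<in>Q. monom 1 i) mod f) ` Pow (window_positions r l n m 0 0) =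
    {g. degree g < degree f}"
proof -
  let ?R = "window_positions r l n m 0 0" and ?res = "\<lambda>Q. (\<Sum>i\<in>Q. monom 1 i) mod f"
  have fin: "finite ?R"
    by (rule finite_subset[of _ "{..<r * l}"]) (auto simp: window_positions_0_0)
  have inj: "inj_on ?res (Pow ?R)"
  proof (rule inj_onI, rule ccontr)
    fix Q1 Q2
    assume Q: "Q1 \<in> Pow ?R" "Q2 \<in> Pow ?R" "?res Q1 = ?res Q2" "Q1 \<noteq> Q2"
    then have "finite Q1" "finite Q2"
      using fin finite_subset by auto
    from Q(3) have "f dvd (\<Sum>i\<in>Q1. monom 1 i) + (\<Sum>i\<in>Q2. monom 1 i)"
      by (simp add: mod_eq_dvd_iff bit_poly_diff_eq_add)
    then have "f dvd (\<Sum>i\<in>(Q1 - Q2) \<union> (Q2 - Q1). monom 1 i)"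
      by (simp only: bit_poly_sum_add_sum[OF \<open>finite Q1\<close> \<open>finite Q2\<close>])
    moreover have "(\<Sum>i\<in>(Q1 - Q2) \<union> (Q2 - Q1). monom 1 i) dvd g_poly ?R"
      unfolding g_poly_def using Q(1,2,4) fin by (intro dvd_prodI) auto
    ultimately show False
      using window_condition dvd_trans by blast
  qed
  have sub: "?res ` Pow ?R \<subseteq> {g. degree g < degree f}"
    using degree_mod_less_degree_pos[OF degree_pos] by auto
  have "card {g :: bit poly. degree g < degree f} = 2 ^ card ?R"
    using card_degree_less[where 'a = bit] degree_pos
    by (simp add: card_window_positions_0_0[OF coprime n_le_r m_le_l] degree_eq)
  also have "\<dots> = card (?res ` Pow ?R)"
    by (simp add: card_image[OF inj] card_Pow fin)
  finally show ?thesis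
    by (intro card_seteq finite_degree_less sub) simp
qed

lemma corner_window_eq_0_iff: "corner_window h = (\<lambda>_ _. 0) \<longleftrightarrow> f dvd h"
proof
  assume zero: "corner_window h = (\<lambda>_ _. 0)"
  have "poly_seq f h j = 0" for j
  proof -
    have "monom 1 j mod f \<in> {g. degree g < degree f}"
      using degree_mod_less_degree_pos[OF degree_pos] by simp
    then obtain Q where Q: "Q \<subseteq> window_positions r l n m 0 0"
      "monom 1 j mod f = (\<Sum>i\<in>Q. monom 1 i) mod f"
      unfolding residues_spanned_by_window_positions[symmetric] by blast
    have "(h * monom 1 j) mod f = (h * (\<Sum>i\<in>Q. monom 1 i)) mod f"
      by (metis Q(2) mod_mult_right_eq)
    then have "poly_seq f h j = poly_seq f (h * (\<Sum>i\<in>Q. monom 1 i)) 0"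
      by (metis poly_seq_mod_cong poly_seq_mult_monom add_0 mult_1)
    also have "\<dots> = (\<Sum>i\<in>Q. poly_seq f h i)"
      by (simp only: sum_distrib_left poly_seq_sum poly_seq_mult_monom mult.left_neutral
          add_0_left)
    also have "\<dots> = 0"
      using Q(1) zero corner_window_mod_pair by (intro sum.neutral) (metis subsetD)
    finally show ?thesis .
  qed
  then show "f dvd h"
    using poly_seq_eq_0_iff[OF irreducible] by blast
next
  assume "f dvd h"
  then show "corner_window h = (\<lambda>_ _. 0)"
    by (simp add: fun_eq_iff corner_window_def window_def fold_arr_def poly_seq_dvd)
qed

lemma corner_window_eq_iff: "corner_window a = corner_window b \<longleftrightarrow> f dvd a - b"
proof -
  have "corner_window a = corner_window b \<longleftrightarrow> corner_window (a + b) = (\<lambda>_ _. 0)"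
    by (simp only: fun_eq_iff corner_window_add bit_add_eq_0_iff)
  then show ?thesis
    by (simp add: corner_window_eq_0_iff bit_poly_diff_eq_add)
qed

lemma corner_window_surj:
  assumes "is_array n m M"
  obtains h where "corner_window h = M"
proof -
  let ?K = "{h :: bit poly. degree h < degree f}"
  have inj: "inj_on corner_window ?K"
    by (rule inj_onI) (simp add: corner_window_eq_iff residue_eqI)
  moreover have "corner_window ` ?K \<subseteq> {M. is_array n m M}"
    using is_array_corner_window by auto
  moreover have "card (corner_window ` ?K) = 2 ^ degree f"
    using card_image[OF inj] card_degree_less[where 'a = bit] degree_pos by simp
  then have "card {M. is_array n m M} \<le> card (corner_window ` ?K)"
    by (simp add: card_arrays degree_eq)
  ultimately have "corner_window ` ?K = {M. is_array n m M}"
    by (intro card_seteq finite_arrays)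
  with assms have "M \<in> corner_window ` ?K"
    by simp
  with that show ?thesis
    by blast
qed

end

locale folded_lfsr_code = folded_lfsr +
  fixes S :: "(nat \<Rightarrow> bit) set"
  assumes S_nonzero_lfsr: "S \<subseteq> {s. lfsr_seq f s \<and> s \<noteq> (\<lambda>_. 0)}"
    and S_representatives:
      "\<And>t. lfsr_seq f t \<Longrightarrow> t \<noteq> (\<lambda>_. 0) \<Longrightarrow> \<exists>!s. s \<in> S \<and> (\<exists>d. t = shift_seq d s)"
begin

lemma S_poly_seqE:
  assumes "s \<in> S"
  obtains h where "s = poly_seq f h" "\<not> f dvd h"
proof -
  have "lfsr_seq f s" "s \<noteq> (\<lambda>_. 0)"
    using assms S_nonzero_lfsr by auto
  moreover obtain h where "s = poly_seq f h"
    using lfsr_seq_imp_poly_seq[OF irreducible \<open>lfsr_seq f s\<close>] .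
  ultimately show ?thesis
    using that poly_seq_eq_0_iff[OF irreducible] by blast
qed

lemma shift_seq_eq_imp_mod_eq:
  assumes "s \<in> S" "shift_seq d1 s = shift_seq d2 s"
  shows "d1 mod r = d2 mod r" "d1 mod l = d2 mod l"
proof -
  obtain h where "s = poly_seq f h" "\<not> f dvd h"
    using S_poly_seqE[OF assms(1)] .
  with assms(2) have "[d1 = d2] (mod r * l)"
    using shift_seq_poly_seq_eq_iff[OF irreducible not_X] exponent_eq by simp
  then show "d1 mod r = d2 mod r" "d1 mod l = d2 mod l"
    using cong_dvd_modulus_nat[of d1 d2 "r * l"] by (simp_all add: cong_def)
qed

lemma fold_arr_nonzero_lfsr:
  assumes "lfsr_seq f t" "t \<noteq> (\<lambda>_. 0)"
  shows "\<exists>B \<in> fold_arr r l ` S. \<exists>a<r. \<exists>b<l. fold_arr r l t = shift_arr r l a b B"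
proof -
  obtain s d where s: "s \<in> S" "t = shift_seq d s"
    using S_representatives[OF assms] by blast
  obtain h where "s = poly_seq f h"
    using S_poly_seqE[OF s(1)] by blast
  then have "fold_arr r l t = shift_arr r l (d mod r) (d mod l) (fold_arr r l s)"
    using s(2) fold_arr_shift_poly_seq by simp
  moreover have "d mod r < r" "d mod l < l"
    using r_pos l_pos by simp_all
  ultimately show ?thesis
    using s(1) by blast
qed

lemma window_fold_arr_eq_corner_window_iff:
  assumes "s \<in> S" "p < r" "q < l" "d mod r = p" "d mod l = q"
  shows "window r l n m (fold_arr r l s) p q = corner_window h \<longleftrightarrow> shift_seq d s = poly_seq f h"
proof -
  obtain h' where "s = poly_seq f h'"
    using S_poly_seqE[OF assms(1)] by blast
  with assms(2-5) show ?thesis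
    by (simp add: window_fold_arr_poly_seq corner_window_eq_iff poly_seq_eq_iff[OF irreducible]
        shift_seq_poly_seq)
qed

lemma window_occurrences_eq_singleton:
  assumes "s \<in> S" "poly_seq f h = shift_seq d s" "\<not> f dvd h"
  shows "{(A, p, q). A \<in> fold_arr r l ` S \<and> p < r \<and> q < l \<and> window r l n m A p q = corner_window h} =
    {(fold_arr r l s, d mod r, d mod l)}" (is "?W = _")
proof (intro equalityI subsetI)
  have t: "lfsr_seq f (poly_seq f h)" "poly_seq f h \<noteq> (\<lambda>_. 0)"
    using assms(3) lfsr_seq_poly_seq[OF f_nonzero] poly_seq_eq_0_iff[OF irreducible] by auto
  fix x
  assume "x \<in> ?W"
  then obtain s' p q where x: "x = (fold_arr r l s', p, q)" "s' \<in> S" "p < r" "q < l"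
    and window: "window r l n m (fold_arr r l s') p q = corner_window h"
    by blast
  obtain d' where d': "d' mod r = p" "d' mod l = q"
    using mod_pair_surj[OF coprime x(3,4)] by metis
  have "shift_seq d' s' = poly_seq f h"
    using window window_fold_arr_eq_corner_window_iff[OF x(2-4) d'] by simp
  then have "s' \<in> S \<and> (\<exists>d. poly_seq f h = shift_seq d s')"
    using x(2) by (blast intro: sym)
  moreover have "s \<in> S \<and> (\<exists>d. poly_seq f h = shift_seq d s)"
    using assms(1,2) by blast
  ultimately have "s' = s"
    using the1_equality[OF S_representatives[OF t]] by metis
  with \<open>shift_seq d' s' = poly_seq f h\<close> assms(2) have "shift_seq d' s = shift_seq d s"
    by simp
  then have "d' mod r = d mod r" "d' mod l = d mod l"
    by (rule shift_seq_eq_imp_mod_eq[OF assms(1)])+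
  with x d' \<open>s' = s\<close> show "x \<in> {(fold_arr r l s, d mod r, d mod l)}"
    by simp
next
  fix x
  assume "x \<in> {(fold_arr r l s, d mod r, d mod l)}"
  moreover have "window r l n m (fold_arr r l s) (d mod r) (d mod l) = corner_window h"
    using window_fold_arr_eq_corner_window_iff[OF assms(1), of "d mod r" "d mod l" d] assms(2)
      r_pos l_pos by simp
  ultimately show "x \<in> ?W"
    using assms(1) r_pos l_pos by auto
qed

lemma card_window_occurrences:
  assumes "is_array n m M" "M \<noteq> (\<lambda>_ _. 0)"
  shows "card {(A, p, q). A \<in> fold_arr r l ` S \<and> p < r \<and> q < l \<and> window r l n m A p q = M} = 1"
proof -
  obtain h where h: "corner_window h = M"
    using corner_window_surj[OF assms(1)] .
  with assms(2) have "\<not> f dvd h"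
    using corner_window_eq_0_iff by blast
  then have "lfsr_seq f (poly_seq f h)" "poly_seq f h \<noteq> (\<lambda>_. 0)"
    using lfsr_seq_poly_seq[OF f_nonzero] poly_seq_eq_0_iff[OF irreducible] by auto
  then obtain s d where "s \<in> S" "poly_seq f h = shift_seq d s"
    using S_representatives by blast
  from window_occurrences_eq_singleton[OF this \<open>\<not> f dvd h\<close>] h show ?thesis
    by simp
qed

lemma shift_add_distinct:
  assumes "A \<in> fold_arr r l ` S" "A' \<in> fold_arr r l ` S" "A \<noteq> A'"
  shows "\<exists>B \<in> fold_arr r l ` S. \<exists>a<r. \<exists>b<l. add_arr A A' = shift_arr r l a b B"
proof -
  obtain s s' where s: "s \<in> S" "s' \<in> S" "A = fold_arr r l s" "A' = fold_arr r l s'"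
    using assms(1,2) by blast
  obtain h h' where "s = poly_seq f h" "s' = poly_seq f h'"
    using S_poly_seqE s(1,2) by metis
  then have "(\<lambda>j. s j + s' j) = poly_seq f (h + h')"
    by (simp add: fun_eq_iff poly_seq_add)
  then have "lfsr_seq f (\<lambda>j. s j + s' j)"
    using lfsr_seq_poly_seq[OF f_nonzero] by auto
  moreover have "(\<lambda>j. s j + s' j) \<noteq> (\<lambda>_. 0)"
  proof
    assume "(\<lambda>j. s j + s' j) = (\<lambda>_. 0)"
    then have "s = s'"
      by (simp only: fun_eq_iff bit_add_eq_0_iff) blast
    with s assms(3) show False
      by simp
  qed
  ultimately show ?thesis
    using fold_arr_nonzero_lfsr s(3,4) add_arr_fold_arr by simp
qed

lemma shift_add_self:
  assumes "A \<in> fold_arr r l ` S" "a < r" "b < l" "(a, b) \<noteq> (0, 0)"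
  shows "\<exists>B \<in> fold_arr r l ` S. \<exists>c<r. \<exists>d<l.
    add_arr A (shift_arr r l a b A) = shift_arr r l c d B"
proof -
  obtain s where s: "s \<in> S" "A = fold_arr r l s"
    using assms(1) by blast
  obtain h where h: "s = poly_seq f h"
    using S_poly_seqE s(1) by metis
  obtain k where k: "k mod r = a" "k mod l = b"
    using mod_pair_surj[OF coprime assms(2,3)] by metis
  have shifted: "shift_arr r l a b (fold_arr r l s) = fold_arr r l (shift_seq k s)"
    using fold_arr_shift_poly_seq[of k h] h k by simp
  have "(\<lambda>j. s j + shift_seq k s j) = poly_seq f (h + h * monom 1 k)"
    using h by (simp add: fun_eq_iff poly_seq_add poly_seq_mult_monom shift_seq_def
        del: add_bit_eq_xor mult_bit_eq_and)
  then have "lfsr_seq f (\<lambda>j. s j + shift_seq k s j)"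
    using lfsr_seq_poly_seq[OF f_nonzero] by simp
  moreover have "(\<lambda>j. s j + shift_seq k s j) \<noteq> (\<lambda>_. 0)"
  proof
    assume zero: "(\<lambda>j. s j + shift_seq k s j) = (\<lambda>_. 0)"
    have "shift_seq 0 s = shift_seq k s"
    proof
      fix j
      show "shift_seq 0 s j = shift_seq k s j"
        using fun_cong[OF zero, of j] by (simp only: shift_seq_def bit_add_eq_0_iff add_0_right)
    qed
    from shift_seq_eq_imp_mod_eq[OF s(1) this] k have "a = 0" "b = 0"
      by simp_all
    with assms(4) show False
      by simp
  qed
  ultimately have "\<exists>B \<in> fold_arr r l ` S. \<exists>c<r. \<exists>d<l.
      fold_arr r l (\<lambda>j. s j + shift_seq k s j) = shift_arr r l c d B"
    by (rule fold_arr_nonzero_lfsr)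
  then show ?thesis
    by (simp only: s(2) shifted add_arr_fold_arr)
qed

theorem is_PRAC_fold_arr: "is_PRAC r l n m (fold_arr r l ` S)"
  unfolding is_PRAC_def
  by (intro conjI)
    (blast intro: is_array_fold_arr card_window_occurrences shift_add_distinct shift_add_self)+

end

theorem theorem7:
  fixes n m l :: nat and f :: "bit poly"
  assumes "n \<ge> 1" and "m \<ge> 1"
    and "irreducible f" and "degree f = n * m" and "f \<noteq> [:0, 1:]"
    and "poly_exponent f = (2 ^ n - 1) * l"
    and "coprime (2 ^ n - 1) l"
    and "\<forall>p < 2 ^ n - 1. \<forall>q < l.
           \<not> f dvd g_poly (window_positions (2 ^ n - 1) l n m p q)"
  shows "\<forall>S. (S \<subseteq> {s. lfsr_seq f s \<and> s \<noteq> (\<lambda>_. 0)} \<and>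
              (\<forall>t. lfsr_seq f t \<and> t \<noteq> (\<lambda>_. 0) \<longrightarrow>
                   (\<exists>!s. s \<in> S \<and> (\<exists>d. t = shift_seq d s))))
            \<longrightarrow> is_PRAC (2 ^ n - 1) l n m (fold_arr (2 ^ n - 1) l ` S)"
proof (intro allI impI)
  fix S
  assume S: "S \<subseteq> {s. lfsr_seq f s \<and> s \<noteq> (\<lambda>_. 0)} \<and>
    (\<forall>t. lfsr_seq f t \<and> t \<noteq> (\<lambda>_. 0) \<longrightarrow> (\<exists>!s. s \<in> S \<and> (\<exists>d. t = shift_seq d s)))"
  have "m \<le> l"
    by (rule le_poly_exponent_cofactor[OF assms(3,5,1,4,6,7)])
  have "n \<le> 2 ^ n - 1"
    using less_exp[of n] by linarith
  have "0 < (2 :: nat) ^ n - 1"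
    using assms(1) one_less_power[of "2 :: nat" n] by simp
  have "0 < l"
    using poly_exponent_pos[OF assms(3,5)] assms(6) by simp
  have window: "\<not> f dvd g_poly (window_positions (2 ^ n - 1) l n m 0 0)"
    using assms(8) \<open>0 < 2 ^ n - 1\<close> \<open>0 < l\<close> by blast
  interpret folded_lfsr_code f "2 ^ n - 1" l n m S
    by (unfold_locales; use assms(3-7) S \<open>m \<le> l\<close> \<open>n \<le> 2 ^ n - 1\<close> window in blast)
  show "is_PRAC (2 ^ n - 1) l n m (fold_arr (2 ^ n - 1) l ` S)"
    by (rule is_PRAC_fold_arr)
qed

end
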